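(* Let $T\in B(\mathcal{F})$ be a block-diagonal operator. If the block-diagonal operator $T-\sum_{i=1}^d R_iTR_i^*$ belongs to $\mathcal{S}$, then $T\in\mathcal{C}=C^*(L_1,\ldots,L_d)$.
   Context: $d\ge2$; $\xi_1,\ldots,\xi_d$ is the standard orthonormal basis of $\mathbb{C}^d$. $\mathcal{F}=\bigoplus_{n\ge0}\mathcal{F}_n$ is the full Fock space, $\mathcal{F}_0=\mathbb{C}\Omega$, $\mathcal{F}_n=(\mathbb{C}^d)^{\otimes n}$ with the usual inner product. $L_j\eta=\xi_j\otimes\eta$, $R_j\eta=\eta\otimes\xi_j$ (with $L_j\Omega=R_j\Omega=\xi_j$). $T$ is block-diagonal if $T(\mathcal{F}_n)\subseteq\mathcal{F}_n$ for all $n$. $\mathcal{S}$ is the set of operators $S\in B(\mathcal{F})$ which are band-limited (there is $b\ge0$ with $S(\mathcal{F}_n)\subseteq\bigoplus_{|m-n|\le b}\mathcal{F}_m$ for all $n$) and summable ($\sum_{n\ge0}\|S|_{\mathcal{F}_n}\|<\infty$). *)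

theory Defs
  imports "HOL-Analysis.Analysis"
begin

text \<open>Full Fock space over C^d, d = CARD('i), realised as l^2 of words:
  the basis vector xi_{i1} (x) ... (x) xi_{in} corresponds to the word [i1,...,in],
  Omega corresponds to the empty word.\<close>

type_synonym 'i vec = "'i list \<Rightarrow> complex"
type_synonym 'i op = "'i vec \<Rightarrow> 'i vec"

definition ell2 :: "'i vec set" where
  "ell2 = {f. (\<lambda>w. (cmod (f w))\<^sup>2) summable_on UNIV}"

definition vnorm :: "'i vec \<Rightarrow> real" where
  "vnorm f = sqrt (\<Sum>\<^sub>\<infinity>w. (cmod (f w))\<^sup>2)"

text \<open>Bounded (complex-linear) operators on the Fock space; only their action on ell2 matters.\<close>
definition bounded_op :: "'i op \<Rightarrow> bool" where
  "bounded_op T \<longleftrightarrow>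
     (\<forall>f\<in>ell2. T f \<in> ell2) \<and>
     (\<forall>f\<in>ell2. \<forall>g\<in>ell2. \<forall>a b. T (\<lambda>w. a * f w + b * g w) = (\<lambda>w. a * T f w + b * T g w)) \<and>
     (\<exists>C. \<forall>f\<in>ell2. vnorm (T f) \<le> C * vnorm f)"

definition opnorm :: "'i op \<Rightarrow> real" where
  "opnorm T = Sup {vnorm (T f) | f. f \<in> ell2 \<and> vnorm f \<le> 1}"

definition in_level :: "nat \<Rightarrow> 'i vec \<Rightarrow> bool" where
  "in_level n f \<longleftrightarrow> (\<forall>w. length w \<noteq> n \<longrightarrow> f w = 0)"

definition block_diagonal :: "'i op \<Rightarrow> bool" where
  "block_diagonal T \<longleftrightarrow> (\<forall>n f. f \<in> ell2 \<and> in_level n f \<longrightarrow> in_level n (T f))"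

definition level_norm :: "'i op \<Rightarrow> nat \<Rightarrow> real" where
  "level_norm S n = Sup {vnorm (S f) | f. f \<in> ell2 \<and> in_level n f \<and> vnorm f \<le> 1}"

definition band_limited :: "'i op \<Rightarrow> bool" where
  "band_limited S \<longleftrightarrow> (\<exists>b::nat. \<forall>n f. f \<in> ell2 \<and> in_level n f \<longrightarrow>
       (\<forall>w. \<bar>int (length w) - int n\<bar> > int b \<longrightarrow> S f w = 0))"

definition classS :: "'i op set" where
  "classS = {S. bounded_op S \<and> band_limited S \<and> summable (level_norm S)}"

definition Lop :: "'i \<Rightarrow> 'i op" where
  "Lop j f = (\<lambda>w. case w of [] \<Rightarrow> 0 | i # v \<Rightarrow> (if i = j then f v else 0))"

definition Ladj :: "'i \<Rightarrow> 'i op" where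
  "Ladj j f = (\<lambda>w. f (j # w))"

definition Rop :: "'i \<Rightarrow> 'i op" where
  "Rop j f = (\<lambda>w. if w \<noteq> [] \<and> last w = j then f (butlast w) else 0)"

definition Radj :: "'i \<Rightarrow> 'i op" where
  "Radj j f = (\<lambda>w. f (w @ [j]))"

text \<open>The (non-closed) algebra generated by L_j, L_j^*; it is a *-algebra, since the
  generating set is closed under adjoints.\<close>
inductive_set polyalg :: "'i op set" where
  gen_L: "Lop j \<in> polyalg"
| gen_Ladj: "Ladj j \<in> polyalg"
| add: "A \<in> polyalg \<Longrightarrow> B \<in> polyalg \<Longrightarrow> (\<lambda>f w. A f w + B f w) \<in> polyalg"
| smult: "A \<in> polyalg \<Longrightarrow> (\<lambda>f w. c * A f w) \<in> polyalg"
| comp: "A \<in> polyalg \<Longrightarrow> B \<in> polyalg \<Longrightarrow> (A \<circ> B) \<in> polyalg"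

definition Calg :: "'i op set" where
  "Calg = {T. bounded_op T \<and>
     (\<forall>e>0. \<exists>P\<in>polyalg. opnorm (\<lambda>f w. T f w - P f w) < e)}"

end

theory Submission
  imports Defs
begin

text \<open>Write \<open>\<Phi>(X) = \<Sum>_i R_i X R_i\<^sup>*\<close>, \<open>D = T - \<Phi>(T)\<close> and \<open>D_m\<close> for the restriction of \<open>D\<close>
  to \<open>F_m\<close>. Unwinding \<open>T = D + \<Phi>(T)\<close> on \<open>F_n\<close> gives \<open>T = \<Sum>_{m \<le> n} D_m \<otimes> I\<close> there, and
  \<open>D_m \<otimes> I\<close> is the restriction of \<open>\<Sum>_{|u| = |v| = m} \<langle>D \<xi>_v, \<xi>_u\<rangle> L_u L_v\<^sup>*\<close>. Keeping the terms
  with \<open>m \<le> N\<close> gives a polynomial \<open>P_N\<close> in the \<open>L_j, L_j\<^sup>*\<close> such that \<open>T - P_N\<close> acts on \<open>F_n\<close> as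
  \<open>\<Sum>_{N < m \<le> n} D_m \<otimes> I\<close>. As \<open>T - P_N\<close> is block diagonal, its norm is at most
  \<open>\<Sum>_{m > N} \<parallel>D_m\<parallel>\<close>, which tends to 0 by summability.\<close>

section \<open>Levels of the Fock space\<close>

definition words :: "nat \<Rightarrow> 'i list set" where
  "words n = {w. length w = n}"

lemma finite_words [simp]: "finite (words n :: ('i::finite) list set)"
proof -
  have "finite {xs::'i list. set xs \<subseteq> UNIV \<and> length xs = n}"
    by (rule finite_lists_length_eq) simp
  then show ?thesis by (simp add: words_def)
qed

lemma sum_words_Suc:
  "(\<Sum>x\<in>words (Suc k). F x) = (\<Sum>j\<in>(UNIV::('i::finite) set). \<Sum>w\<in>words k. F (w @ [j]))"
proof -
  have img: "words (Suc k) = (\<lambda>(w, j). w @ [j]) ` (words k \<times> (UNIV::'i set))"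
  proof (rule set_eqI, rule iffI)
    fix x :: "'i list" assume x: "x \<in> words (Suc k)"
    then have "x \<noteq> []" by (auto simp: words_def)
    then show "x \<in> (\<lambda>(w, j). w @ [j]) ` (words k \<times> UNIV)"
      by (intro image_eqI[of _ _ "(butlast x, last x)"]) (use x in \<open>auto simp: words_def\<close>)
  qed (auto simp: words_def)
  have inj: "inj_on (\<lambda>(w, j). w @ [j]) (words k \<times> (UNIV::'i set))"
    by (auto simp: inj_on_def)
  have "(\<Sum>x\<in>words (Suc k). F x) = (\<Sum>(w, j)\<in>words k \<times> (UNIV::'i set). F (w @ [j]))"
    unfolding img by (subst sum.reindex[OF inj]) (simp add: case_prod_unfold)
  also have "\<dots> = (\<Sum>j\<in>(UNIV::'i set). \<Sum>w\<in>words k. F (w @ [j]))"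
    by (subst sum.cartesian_product[symmetric]) (rule sum.swap)
  finally show ?thesis .
qed

definition level_part :: "nat \<Rightarrow> 'i vec \<Rightarrow> 'i vec" where
  "level_part n f = (\<lambda>w. if length w = n then f w else 0)"

lemma in_level_level_part [simp]: "in_level n (level_part n f)"
  by (simp add: level_part_def in_level_def)

lemma sum_level_part: "(\<lambda>w. \<Sum>m\<le>K. level_part m f w) = (\<lambda>w. if length w \<le> K then f w else 0)"
  by (simp add: level_part_def)

lemma in_level_ell2: assumes "in_level n (f::('i::finite) vec)" shows "f \<in> ell2"
proof -
  have "(\<lambda>w. (cmod (f w))\<^sup>2) summable_on words n" by simp
  then show ?thesis unfolding ell2_def
    by (subst (asm) summable_on_cong_neutral[where T=UNIV and g="\<lambda>w. (cmod (f w))\<^sup>2"])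
       (use assms in \<open>auto simp: in_level_def words_def\<close>)
qed

lemma vnorm_in_level: assumes "in_level n (f::('i::finite) vec)"
  shows "vnorm f = L2_set (\<lambda>w. cmod (f w)) (words n)"
proof -
  have "(\<Sum>\<^sub>\<infinity>w. (cmod (f w))\<^sup>2) = (\<Sum>\<^sub>\<infinity>w\<in>words n. (cmod (f w))\<^sup>2)"
    by (rule infsum_cong_neutral) (use assms in \<open>auto simp: in_level_def words_def\<close>)
  then show ?thesis by (simp add: vnorm_def L2_set_def)
qed

lemma vnorm_in_level_power2: assumes "in_level n (f::('i::finite) vec)"
  shows "(vnorm f)\<^sup>2 = (\<Sum>w\<in>words n. (cmod (f w))\<^sup>2)"
  unfolding vnorm_in_level[OF assms] L2_set_def by (simp add: sum_nonneg)

lemma in_level_vnorm_eq_0: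
  assumes "in_level n (f::('i::finite) vec)" "vnorm f = 0"
  shows "f = (\<lambda>w. 0)"
proof
  fix w
  have "\<forall>x\<in>words n. cmod (f x) = 0"
    using assms(2) unfolding vnorm_in_level[OF assms(1)] by (simp add: L2_set_eq_0_iff)
  then show "f w = 0"
    using assms(1) by (cases "length w = n") (auto simp: words_def in_level_def)
qed

lemma ell2_lincomb:
  assumes "f \<in> ell2" "g \<in> ell2"
  shows "(\<lambda>w. a * f w + b * g w) \<in> ell2"
proof -
  have s: "(\<lambda>w. 2 * (cmod a)\<^sup>2 * (cmod (f w))\<^sup>2 + 2 * (cmod b)\<^sup>2 * (cmod (g w))\<^sup>2) summable_on UNIV"
    using assms unfolding ell2_def by (intro summable_on_add summable_on_cmult_right) auto
  have le: "(cmod (a * f w + b * g w))\<^sup>2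
      \<le> 2 * (cmod a)\<^sup>2 * (cmod (f w))\<^sup>2 + 2 * (cmod b)\<^sup>2 * (cmod (g w))\<^sup>2" for w
  proof -
    have "cmod (a * f w + b * g w) \<le> cmod a * cmod (f w) + cmod b * cmod (g w)"
      by (metis norm_mult norm_triangle_ineq)
    then have "(cmod (a * f w + b * g w))\<^sup>2 \<le> (cmod a * cmod (f w) + cmod b * cmod (g w))\<^sup>2"
      by (simp add: power_mono)
    also have "\<dots> \<le> 2 * (cmod a * cmod (f w))\<^sup>2 + 2 * (cmod b * cmod (g w))\<^sup>2"
      using sum_squares_bound[of "cmod a * cmod (f w)" "cmod b * cmod (g w)"]
      by (simp add: power2_eq_square algebra_simps)
    also have "\<dots> = 2 * (cmod a)\<^sup>2 * (cmod (f w))\<^sup>2 + 2 * (cmod b)\<^sup>2 * (cmod (g w))\<^sup>2"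
      by (simp add: power_mult_distrib)
    finally show ?thesis .
  qed
  show ?thesis unfolding ell2_def mem_Collect_eq
    by (rule summable_on_comparison_test[OF s]) (use le in auto)
qed

lemma ell2_zero [simp]: "(\<lambda>w. 0) \<in> ell2"
  by (simp add: ell2_def)

lemma ell2_add: "f \<in> ell2 \<Longrightarrow> g \<in> ell2 \<Longrightarrow> (\<lambda>w. f w + g w) \<in> ell2"
  using ell2_lincomb[of f g 1 1] by simp

lemma ell2_diff: "f \<in> ell2 \<Longrightarrow> g \<in> ell2 \<Longrightarrow> (\<lambda>w. f w - g w) \<in> ell2"
  using ell2_lincomb[of f g 1 "-1"] by simp

lemma ell2_scale: "f \<in> ell2 \<Longrightarrow> (\<lambda>w. c * f w) \<in> ell2"
  using ell2_lincomb[of f f c 0] by simp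

lemma ell2_sum: "finite A \<Longrightarrow> (\<forall>a\<in>A. g a \<in> ell2) \<Longrightarrow> (\<lambda>w. \<Sum>a\<in>A. g a w) \<in> ell2"
  by (induction A rule: finite_induct) (auto intro: ell2_add)

lemma ell2_truncate:
  fixes f :: "('i::finite) vec"
  shows "(\<lambda>w. if length w \<le> K then f w else 0) \<in> ell2"
  unfolding sum_level_part[symmetric]
  by (rule ell2_sum) (auto intro: in_level_ell2[OF in_level_level_part])

lemma vnorm_nonneg: "vnorm f \<ge> 0"
  by (simp add: vnorm_def infsum_nonneg)

lemma vnorm_zero [simp]: "vnorm (\<lambda>w. 0) = 0"
  by (simp add: vnorm_def)

lemma vnorm_power2: "(vnorm f)\<^sup>2 = (\<Sum>\<^sub>\<infinity>w. (cmod (f w))\<^sup>2)"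
  unfolding vnorm_def by (simp add: infsum_nonneg)

lemma vnorm_scale: assumes "f \<in> ell2" shows "vnorm (\<lambda>w. c * f w) = cmod c * vnorm f"
proof -
  have "(\<Sum>\<^sub>\<infinity>w. (cmod (c * f w))\<^sup>2) = (\<Sum>\<^sub>\<infinity>w. (cmod c)\<^sup>2 * (cmod (f w))\<^sup>2)"
    by (simp add: norm_mult power_mult_distrib)
  also have "\<dots> = (cmod c)\<^sup>2 * (\<Sum>\<^sub>\<infinity>w. (cmod (f w))\<^sup>2)"
    by (rule infsum_cmult_right) (use assms in \<open>simp add: ell2_def\<close>)
  finally show ?thesis unfolding vnorm_def by (simp add: real_sqrt_mult)
qed

lemma norm_le_vnorm: assumes "f \<in> ell2" shows "cmod (f x) \<le> vnorm f"
proof -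
  have "(\<Sum>w\<in>{x}. (cmod (f w))\<^sup>2) \<le> (\<Sum>\<^sub>\<infinity>w. (cmod (f w))\<^sup>2)"
    by (rule finite_sum_le_infsum) (use assms in \<open>auto simp: ell2_def\<close>)
  then show ?thesis unfolding vnorm_def by (simp add: real_le_rsqrt)
qed

lemma ell2_tail_vnorm_small:
  fixes f :: "('i::finite) vec"
  assumes "f \<in> ell2" "e > 0"
  obtains K where "\<And>t. t \<in> ell2 \<Longrightarrow> (\<forall>w. length w \<le> K \<longrightarrow> t w = 0) \<Longrightarrow>
      (\<forall>w. cmod (t w) \<le> cmod (f w)) \<Longrightarrow> vnorm t \<le> e"
proof -
  define s where "s = (\<lambda>w. (cmod (f w))\<^sup>2)"
  have ss: "s summable_on UNIV" using assms by (simp add: ell2_def s_def)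
  obtain F where F: "finite F" "dist (sum s F) (infsum s UNIV) \<le> e\<^sup>2"
    using infsum_finite_approximation[OF ss, of "e\<^sup>2"] assms by auto
  define K where "K = Max (insert 0 (length ` F))"
  have FK: "w \<in> F \<Longrightarrow> length w \<le> K" for w using F(1) by (auto simp: K_def)
  show thesis
  proof
    fix t :: "'i vec"
    assume t: "t \<in> ell2" "\<forall>w. length w \<le> K \<longrightarrow> t w = 0" "\<forall>w. cmod (t w) \<le> cmod (f w)"
    define u where "u = (\<lambda>w. if w \<in> F then s w else 0)"
    have su: "u summable_on UNIV"
      by (subst summable_on_cong_neutral[where T=F and g=s]) (use F in \<open>auto simp: u_def\<close>)
    have iu: "infsum u UNIV = sum s F"
      by (subst infsum_cong_neutral[where T=F and g=s]) (use F in \<open>auto simp: u_def\<close>)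
    have st: "(\<lambda>w. (cmod (t w))\<^sup>2) summable_on UNIV" using t by (simp add: ell2_def)
    have "(\<Sum>\<^sub>\<infinity>w. (cmod (t w))\<^sup>2) + sum s F = (\<Sum>\<^sub>\<infinity>w. (cmod (t w))\<^sup>2 + u w)"
      using infsum_add[OF st su] iu by simp
    also have "\<dots> \<le> infsum s UNIV"
    proof (rule infsum_mono[OF summable_on_add[OF st su] ss])
      fix w :: "'i list"
      show "(cmod (t w))\<^sup>2 + u w \<le> s w"
      proof (cases "w \<in> F")
        case True then show ?thesis using FK[OF True] t(2) by (simp add: u_def)
      next
        case False then show ?thesis using t(3) by (simp add: u_def s_def power_mono)
      qed
    qed
    finally have "(\<Sum>\<^sub>\<infinity>w. (cmod (t w))\<^sup>2) \<le> e\<^sup>2" using F(2) by (simp add: dist_real_def)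
    then have "vnorm t \<le> sqrt (e\<^sup>2)" unfolding vnorm_def by (rule real_sqrt_le_mono)
    then show "vnorm t \<le> e" using assms by simp
  qed
qed

lemma bounded_op_linear: "bounded_op T \<Longrightarrow> f \<in> ell2 \<Longrightarrow> g \<in> ell2 \<Longrightarrow>
    T (\<lambda>w. a * f w + b * g w) = (\<lambda>w. a * T f w + b * T g w)"
  by (simp add: bounded_op_def)

lemma bounded_op_zero: "bounded_op T \<Longrightarrow> T (\<lambda>w. 0) = (\<lambda>w. 0)"
  using bounded_op_linear[OF _ ell2_zero ell2_zero, of T 0 0] by simp

lemma bounded_op_add: "bounded_op T \<Longrightarrow> f \<in> ell2 \<Longrightarrow> g \<in> ell2 \<Longrightarrow>
    T (\<lambda>w. f w + g w) = (\<lambda>w. T f w + T g w)"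
  using bounded_op_linear[of T f g 1 1] by simp

lemma bounded_op_scale: "bounded_op T \<Longrightarrow> f \<in> ell2 \<Longrightarrow> T (\<lambda>w. c * f w) = (\<lambda>w. c * T f w)"
  using bounded_op_linear[of T f f c 0] by simp

lemma bounded_op_sum:
  assumes "bounded_op T"
  shows "finite A \<Longrightarrow> (\<forall>a\<in>A. g a \<in> ell2) \<Longrightarrow>
    T (\<lambda>w. \<Sum>a\<in>A. g a w) = (\<lambda>w. \<Sum>a\<in>A. T (g a) w)"
proof (induction A rule: finite_induct)
  case empty then show ?case using bounded_op_zero[OF assms] by simp
next
  case (insert x F)
  have "T (\<lambda>w. \<Sum>a\<in>insert x F. g a w) = T (\<lambda>w. g x w + (\<Sum>a\<in>F. g a w))"
    using insert by simp
  also have "\<dots> = (\<lambda>w. T (g x) w + T (\<lambda>w. \<Sum>a\<in>F. g a w) w)"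
    using insert by (intro bounded_op_add[OF assms]) (auto intro: ell2_sum)
  finally show ?case using insert by simp
qed

lemma bounded_op_ell2: "bounded_op T \<Longrightarrow> f \<in> ell2 \<Longrightarrow> T f \<in> ell2"
  by (simp add: bounded_op_def)

lemma bounded_op_bound_pos:
  assumes "bounded_op T"
  obtains C where "C > 0" "\<And>f. f \<in> ell2 \<Longrightarrow> vnorm (T f) \<le> C * vnorm f"
proof -
  obtain C where C: "\<forall>f\<in>ell2. vnorm (T f) \<le> C * vnorm f"
    using assms by (auto simp: bounded_op_def)
  have "vnorm (T f) \<le> max C 1 * vnorm f" if "f \<in> ell2" for f
    using C that order_trans mult_right_mono[OF max.cobounded1 vnorm_nonneg] by blast
  then show thesis by (intro that[of "max C 1"]) auto
qed

definition basis :: "'i list \<Rightarrow> 'i vec" where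
  "basis v = (\<lambda>w. if w = v then 1 else 0)"

lemma in_level_basis: "in_level (length v) (basis v)"
  by (auto simp: in_level_def basis_def)

lemma bounded_op_apply_in_level:
  fixes S :: "('i::finite) op"
  assumes "bounded_op S" "in_level n f"
  shows "S f x = (\<Sum>v\<in>words n. S (basis v) x * f v)"
proof -
  have basis_ell2: "basis v \<in> ell2" for v :: "'i list"
    by (rule in_level_ell2[OF in_level_basis])
  have f_eq: "f = (\<lambda>w. \<Sum>v\<in>words n. f v * basis v w)"
  proof
    fix w
    have "(\<Sum>v\<in>words n. f v * basis v w) = (\<Sum>v\<in>words n. if w = v then f v else 0)"
      by (intro sum.cong) (auto simp: basis_def)
    also have "\<dots> = (if w \<in> words n then f w else 0)"
      by (rule sum.delta'[OF finite_words])
    finally show "f w = (\<Sum>v\<in>words n. f v * basis v w)"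
      using assms(2) by (auto simp: words_def in_level_def)
  qed
  have "S f = (\<lambda>w. \<Sum>v\<in>words n. S (\<lambda>w. f v * basis v w) w)"
    by (subst f_eq, rule bounded_op_sum[OF assms(1) finite_words]) (simp add: ell2_scale basis_ell2)
  also have "\<dots> = (\<lambda>w. \<Sum>v\<in>words n. f v * S (basis v) w)"
    using bounded_op_scale[OF assms(1) basis_ell2] by simp
  finally show ?thesis by (simp add: mult.commute)
qed

lemma bdd_above_level_norm:
  assumes "bounded_op S"
  shows "bdd_above {vnorm (S f) |f. f \<in> ell2 \<and> in_level n f \<and> vnorm f \<le> 1}"
proof -
  obtain C where C: "C > 0" "\<And>g. g \<in> ell2 \<Longrightarrow> vnorm (S g) \<le> C * vnorm g"
    using bounded_op_bound_pos[OF assms] by blast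
  have "vnorm (S g) \<le> C" if "g \<in> ell2" "vnorm g \<le> 1" for g
  proof -
    have "vnorm (S g) \<le> C * vnorm g" by (rule C(2)[OF that(1)])
    also have "\<dots> \<le> C" using mult_left_le[OF that(2)] C(1) by simp
    finally show ?thesis .
  qed
  then show ?thesis by (intro bdd_aboveI[of _ C]) blast
qed

lemma level_norm_nonneg:
  fixes S :: "('i::finite) op"
  assumes "bounded_op S"
  shows "level_norm S n \<ge> 0"
proof -
  have "0 \<in> {vnorm (S f) |f. f \<in> ell2 \<and> in_level n f \<and> vnorm f \<le> 1}"
    by (intro CollectI exI[of _ "\<lambda>w. 0"]) (simp add: in_level_def bounded_op_zero[OF assms])
  then show ?thesis unfolding level_norm_def
    by (rule cSup_upper[OF _ bdd_above_level_norm[OF assms]])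
qed

lemma vnorm_le_level_norm:
  fixes S :: "('i::finite) op"
  assumes S: "bounded_op S" and f: "in_level n f"
  shows "vnorm (S f) \<le> level_norm S n * vnorm f"
proof (cases "vnorm f = 0")
  case True
  then show ?thesis using in_level_vnorm_eq_0[OF f] bounded_op_zero[OF S] by simp
next
  case False
  then have pos: "vnorm f > 0" using vnorm_nonneg[of f] by simp
  define c where "c = complex_of_real (1 / vnorm f)"
  define g where "g = (\<lambda>w. c * f w)"
  have fe: "f \<in> ell2" by (rule in_level_ell2[OF f])
  have gl: "in_level n g" using f by (simp add: g_def in_level_def)
  have "vnorm g = 1"
    using vnorm_scale[OF fe, of c] pos by (simp add: g_def c_def norm_divide)
  then have "vnorm (S g) \<le> level_norm S n" unfolding level_norm_def
    using in_level_ell2[OF gl] gl by (intro cSup_upper[OF _ bdd_above_level_norm[OF S]]) auto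
  moreover have "S g = (\<lambda>w. c * S f w)"
    unfolding g_def by (rule bounded_op_scale[OF S fe])
  then have "vnorm (S g) = vnorm (S f) / vnorm f"
    using vnorm_scale[OF bounded_op_ell2[OF S fe], of c] pos by (simp add: c_def norm_divide)
  ultimately show ?thesis using pos by (simp add: divide_le_eq mult.commute)
qed

section \<open>Block-diagonal operators\<close>

lemma block_diagonal_in_level:
  fixes T :: "('i::finite) op"
  assumes "block_diagonal T" "in_level n f"
  shows "in_level n (T f)"
  using assms in_level_ell2[OF assms(2)] unfolding block_diagonal_def by blast

lemma block_diagonal_apply_truncate_off_level:
  fixes T :: "('i::finite) op"
  assumes T: "bounded_op T" "block_diagonal T"
    and h: "\<And>w. length w = length x \<Longrightarrow> h w = 0"
  shows "T (\<lambda>w. if length w \<le> K then h w else 0) x = 0"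
proof -
  have "T (\<lambda>w. \<Sum>m\<le>K. level_part m h w) = (\<lambda>w. \<Sum>m\<le>K. T (level_part m h) w)"
    by (rule bounded_op_sum[OF T(1)]) (auto intro: in_level_ell2[OF in_level_level_part])
  moreover have "T (level_part m h) x = 0" for m
  proof (cases "m = length x")
    case True
    then have "level_part m h = (\<lambda>w. 0)" by (auto simp: level_part_def h)
    then show ?thesis using bounded_op_zero[OF T(1)] by simp
  next
    case False
    have "in_level m (T (level_part m h))"
      by (rule block_diagonal_in_level[OF T(2) in_level_level_part])
    then show ?thesis using False by (auto simp: in_level_def)
  qed
  ultimately show ?thesis by (simp add: sum_level_part)
qed

lemma block_diagonal_apply_off_level:
  fixes T :: "('i::finite) op"
  assumes T: "bounded_op T" "block_diagonal T"
    and h: "h \<in> ell2" "\<And>w. length w = length x \<Longrightarrow> h w = 0"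
  shows "T h x = 0"
proof -
  obtain C where C: "C > 0" "\<And>g. g \<in> ell2 \<Longrightarrow> vnorm (T g) \<le> C * vnorm g"
    using bounded_op_bound_pos[OF T(1)] by blast
  have "cmod (T h x) \<le> 0 + e" if "e > 0" for e
  proof -
    obtain K where K: "\<And>t. t \<in> ell2 \<Longrightarrow> (\<forall>w. length w \<le> K \<longrightarrow> t w = 0) \<Longrightarrow>
        (\<forall>w. cmod (t w) \<le> cmod (h w)) \<Longrightarrow> vnorm t \<le> e / C"
      using ell2_tail_vnorm_small[OF h(1), of "e / C"] \<open>e > 0\<close> C(1) by auto
    define head where "head = (\<lambda>w. if length w \<le> K then h w else 0)"
    define tail where "tail = (\<lambda>w. h w - head w)"
    have tail_ell2: "tail \<in> ell2"
      unfolding tail_def head_def by (rule ell2_diff[OF h(1) ell2_truncate])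
    have "T h = (\<lambda>w. T head w + T tail w)"
      using bounded_op_add[OF T(1) ell2_truncate[of K h] tail_ell2]
      by (simp add: tail_def head_def)
    then have "T h x = T tail x"
      using block_diagonal_apply_truncate_off_level[OF T h(2)] by (simp add: head_def)
    also have "cmod (T tail x) \<le> C * vnorm tail"
      using norm_le_vnorm[OF bounded_op_ell2[OF T(1) tail_ell2], of x] C(2)[OF tail_ell2] by linarith
    also have "\<dots> \<le> C * (e / C)"
      using K[OF tail_ell2] C(1) by (intro mult_left_mono) (auto simp: tail_def head_def)
    finally show ?thesis using C(1) by simp
  qed
  then show ?thesis using field_le_epsilon[of "cmod (T h x)" 0] by simp
qed

lemma block_diagonal_apply_level_part:
  fixes T :: "('i::finite) op"
  assumes T: "bounded_op T" "block_diagonal T" and f: "f \<in> ell2"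
  shows "T f x = T (level_part (length x) f) x"
proof -
  define p where "p = level_part (length x) f"
  have p: "p \<in> ell2" unfolding p_def by (rule in_level_ell2[OF in_level_level_part])
  have "T f = (\<lambda>w. T p w + T (\<lambda>w. f w - p w) w)"
    using bounded_op_add[OF T(1) p ell2_diff[OF f p]] by simp
  moreover have "T (\<lambda>w. f w - p w) x = 0"
    by (rule block_diagonal_apply_off_level[OF T ell2_diff[OF f p]]) (simp add: p_def level_part_def)
  ultimately show ?thesis by (simp add: p_def)
qed

text \<open>No boundedness of \<open>G\<close> is assumed: it is applied to residuals \<open>T - P_N\<close>, which are only
  known to be bounded levelwise.\<close>

lemma vnorm_le_of_levelwise:
  fixes G :: "('i::finite) op"
  assumes levelwise: "\<And>f x. f \<in> ell2 \<Longrightarrow> G f x = G (level_part (length x) f) x"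
    and level: "\<And>n f. in_level n f \<Longrightarrow> in_level n (G f)"
    and bound: "\<And>n f. in_level n f \<Longrightarrow> vnorm (G f) \<le> c * vnorm f"
    and c: "c \<ge> 0" and f: "f \<in> ell2"
  shows "vnorm (G f) \<le> c * vnorm f"
proof -
  define q where "q = (\<lambda>x. (cmod (G f x))\<^sup>2)"
  have fs: "(\<lambda>w. (cmod (f w))\<^sup>2) summable_on UNIV" using f by (simp add: ell2_def)
  have on_level: "(\<Sum>x\<in>words n. q x) \<le> c\<^sup>2 * (\<Sum>x\<in>words n. (cmod (f x))\<^sup>2)" for n
  proof -
    have fn: "in_level n (level_part n f)" by simp
    have "(\<Sum>x\<in>words n. q x) = (\<Sum>x\<in>words n. (cmod (G (level_part n f) x))\<^sup>2)"
      using levelwise[OF f] by (intro sum.cong) (auto simp: q_def words_def)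
    also have "\<dots> = (vnorm (G (level_part n f)))\<^sup>2"
      by (rule vnorm_in_level_power2[OF level[OF fn], symmetric])
    also have "\<dots> \<le> (c * vnorm (level_part n f))\<^sup>2"
      by (rule power_mono[OF bound[OF fn] vnorm_nonneg])
    also have "\<dots> = c\<^sup>2 * (vnorm (level_part n f))\<^sup>2" by (simp add: power_mult_distrib)
    also have "(vnorm (level_part n f))\<^sup>2 = (\<Sum>x\<in>words n. (cmod (f x))\<^sup>2)"
      unfolding vnorm_in_level_power2[OF fn] by (intro sum.cong) (auto simp: level_part_def words_def)
    finally show ?thesis .
  qed
  have "infsum q UNIV \<le> c\<^sup>2 * (vnorm f)\<^sup>2"
  proof (cases "q summable_on UNIV")
    case True
    show ?thesis
    proof (rule infsum_le_finite_sums[OF True])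
      fix F :: "'i list set" assume F: "finite F" "F \<subseteq> UNIV"
      define K where "K = Max (insert 0 (length ` F))"
      define U where "U = (\<Union>n\<le>K. words n :: 'i list set)"
      have FU: "F \<subseteq> U" using F(1) by (auto simp: U_def K_def words_def)
      have disj: "\<forall>i\<in>{..K}. \<forall>j\<in>{..K}. i \<noteq> j \<longrightarrow> words i \<inter> words j = ({}::'i list set)"
        by (auto simp: words_def)
      have "sum q F \<le> sum q U" by (rule sum_mono2[OF _ FU]) (auto simp: U_def q_def)
      also have "\<dots> = (\<Sum>n\<le>K. \<Sum>x\<in>words n. q x)"
        unfolding U_def by (rule sum.UNION_disjoint) (use disj in auto)
      also have "\<dots> \<le> (\<Sum>n\<le>K. c\<^sup>2 * (\<Sum>x\<in>words n. (cmod (f x))\<^sup>2))"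
        by (rule sum_mono[OF on_level])
      also have "\<dots> = c\<^sup>2 * (\<Sum>x\<in>U. (cmod (f x))\<^sup>2)"
        unfolding U_def sum_distrib_left[symmetric] by (subst sum.UNION_disjoint) (use disj in auto)
      also have "\<dots> \<le> c\<^sup>2 * (vnorm f)\<^sup>2"
        unfolding vnorm_power2 by (intro mult_left_mono finite_sum_le_infsum[OF fs]) (auto simp: U_def)
      finally show "sum q F \<le> c\<^sup>2 * (vnorm f)\<^sup>2" .
    qed
  qed (simp add: infsum_not_exists)
  then have "sqrt (infsum q UNIV) \<le> sqrt (c\<^sup>2 * (vnorm f)\<^sup>2)"
    by (rule real_sqrt_le_mono)
  then show ?thesis using c vnorm_nonneg[of f] by (simp add: vnorm_def q_def real_sqrt_mult)
qed

lemma opnorm_le_of_levelwise: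
  fixes G :: "('i::finite) op"
  assumes "\<And>f x. f \<in> ell2 \<Longrightarrow> G f x = G (level_part (length x) f) x"
    and "\<And>n f. in_level n f \<Longrightarrow> in_level n (G f)"
    and "\<And>n f. in_level n f \<Longrightarrow> vnorm (G f) \<le> c * vnorm f"
    and c: "c \<ge> 0"
  shows "opnorm G \<le> c"
  unfolding opnorm_def
proof (rule cSup_least)
  show "{vnorm (G f) |f. f \<in> ell2 \<and> vnorm f \<le> 1} \<noteq> {}"
    by (auto intro!: exI[of _ "\<lambda>w. 0"])
next
  fix y assume "y \<in> {vnorm (G f) |f. f \<in> ell2 \<and> vnorm f \<le> 1}"
  then obtain f where f: "y = vnorm (G f)" "f \<in> ell2" "vnorm f \<le> 1" by blast
  have "y \<le> c * vnorm f" unfolding f(1) by (rule vnorm_le_of_levelwise[OF assms f(2)])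
  also have "\<dots> \<le> c" using f(3) c by (simp add: mult_left_le)
  finally show "y \<le> c" .
qed

section \<open>The map \<open>X \<mapsto> \<Sum>_i R_i X R_i\<^sup>*\<close>\<close>

definition Rsandwich :: "('i::finite) op \<Rightarrow> 'i op" where
  "Rsandwich X f w = (\<Sum>i\<in>UNIV. Rop i (X (Radj i f)) w)"

lemma Rsandwich_apply:
  "Rsandwich X f x = (if x = [] then 0 else X (Radj (last x) f) (butlast x))"
  by (auto simp: Rsandwich_def Rop_def sum.delta sum.delta')

lemma Radj_in_level_Suc: "in_level (Suc k) f \<Longrightarrow> in_level k (Radj j f)"
  by (auto simp: in_level_def Radj_def)

lemma Rsandwich_in_level:
  fixes X :: "('i::finite) op"
  assumes X0: "X (\<lambda>w. 0) = (\<lambda>w. 0)" and X: "\<And>k g. in_level k g \<Longrightarrow> in_level k (X g)"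
    and f: "in_level n f"
  shows "in_level n (Rsandwich X f)"
  unfolding in_level_def Rsandwich_apply
proof (intro allI impI)
  fix x :: "'i list" assume x: "length x \<noteq> n"
  show "(if x = [] then 0 else X (Radj (last x) f) (butlast x)) = 0"
  proof (cases n)
    case 0
    then have "Radj (last x) f = (\<lambda>w. 0)" using f by (auto simp: in_level_def Radj_def)
    then show ?thesis using X0 by simp
  next
    case (Suc k)
    have "in_level k (X (Radj (last x) f))"
      by (rule X[OF Radj_in_level_Suc]) (use f Suc in simp)
    moreover have "x \<noteq> [] \<Longrightarrow> length (butlast x) \<noteq> k" using x Suc by auto
    ultimately show ?thesis by (auto simp: in_level_def)
  qed
qed

section \<open>Polynomials in the left creation operators\<close>

primrec Lword :: "'i list \<Rightarrow> 'i op" where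
  "Lword [] = id"
| "Lword (i # u) = Lop i \<circ> Lword u"

primrec Lword_adj :: "'i list \<Rightarrow> 'i op" where
  "Lword_adj [] = id"
| "Lword_adj (i # v) = Lword_adj v \<circ> Ladj i"

lemma Lword_apply: "Lword u f x = (if take (length u) x = u then f (drop (length u) x) else 0)"
proof (induction u arbitrary: x)
  case (Cons i u)
  show ?case by (cases x) (auto simp: Lop_def Cons)
qed simp

lemma Lword_adj_apply: "Lword_adj v f w = f (v @ w)"
  by (induction v arbitrary: f) (auto simp: Ladj_def)

lemma id_polyalg: "(id :: 'i op) \<in> polyalg"
proof -
  have "Ladj (undefined::'i) \<circ> Lop undefined = id"
    by (auto simp: Ladj_def Lop_def fun_eq_iff)
  then show ?thesis using polyalg.comp[OF polyalg.gen_Ladj polyalg.gen_L] by metis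
qed

lemma Lword_polyalg: "Lword u \<in> polyalg"
proof (induction u)
  case (Cons i u)
  show ?case unfolding Lword.simps by (rule polyalg.comp[OF polyalg.gen_L Cons])
qed (simp only: Lword.simps id_polyalg)

lemma Lword_adj_polyalg: "Lword_adj v \<in> polyalg"
proof (induction v)
  case (Cons i v)
  show ?case unfolding Lword_adj.simps by (rule polyalg.comp[OF Cons polyalg.gen_Ladj])
qed (simp only: Lword_adj.simps id_polyalg)

lemma polyalg_sum:
  "finite A \<Longrightarrow> (\<forall>a\<in>A. X a \<in> polyalg) \<Longrightarrow> (\<lambda>f w. \<Sum>a\<in>A. X a f w) \<in> polyalg"
proof (induction A rule: finite_induct)
  case empty
  then show ?case using polyalg.smult[OF id_polyalg, of 0] by simp
next
  case (insert x F)
  then show ?case using polyalg.add[of "X x" "\<lambda>f w. \<Sum>a\<in>F. X a f w"] by simp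
qed

definition expansion :: "('i::finite) op \<Rightarrow> nat \<Rightarrow> 'i op" where
  "expansion D N = (\<lambda>f x. \<Sum>m\<le>N. \<Sum>u\<in>words m. \<Sum>v\<in>words m.
     D (basis v) u * (Lword u \<circ> Lword_adj v) f x)"

lemma expansion_polyalg: "expansion D N \<in> polyalg"
  unfolding expansion_def
  by (intro polyalg_sum ballI finite_words finite_atMost polyalg.smult
      polyalg.comp Lword_polyalg Lword_adj_polyalg)

lemma expansion_apply:
  "expansion D N f x = (\<Sum>m\<le>N. \<Sum>u\<in>words m. \<Sum>v\<in>words m.
     D (basis v) u * (if take m x = u then f (v @ drop m x) else 0))"
  unfolding expansion_def
  by (intro sum.cong refl) (auto simp: words_def Lword_apply Lword_adj_apply)

lemma expansion_in_level:
  fixes f :: "('i::finite) vec"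
  assumes "in_level n f"
  shows "in_level n (expansion D N f)"
  unfolding in_level_def expansion_apply
proof (intro allI impI sum.neutral ballI)
  fix x u v :: "'i list" and m
  assume "length x \<noteq> n" "m \<in> {..N}" "u \<in> words m" "v \<in> words m"
  then show "D (basis v) u * (if take m x = u then f (v @ drop m x) else 0) = 0"
    using assms by (cases "m \<le> length x") (auto simp: in_level_def words_def)
qed

lemma expansion_level_part:
  fixes x :: "('i::finite) list"
  shows "expansion D N f x = expansion D N (level_part (length x) f) x"
  unfolding expansion_apply
  by (intro sum.cong refl) (auto simp: level_part_def words_def)

text \<open>The terms of \<open>P_N - \<Phi>(P_N)\<close> telescope: for \<open>|u| = m\<close> only \<open>x = u\<close> survives.\<close>

lemma prefix_indicator_diff:
  assumes "length u = m"
  shows "(if take m x = u then F (drop m x) else 0) -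
    (if x \<noteq> [] \<and> take m (butlast x) = u then F (drop m (butlast x) @ [last x]) else 0)
    = (if x = u then F [] else (0::complex))"
proof (cases x rule: rev_exhaust)
  case (snoc y a)
  show ?thesis
  proof (cases "m \<le> length y")
    case True
    then show ?thesis using assms snoc by auto
  next
    case False
    then have "take m y \<noteq> u" "take m x = u \<longleftrightarrow> x = u" using assms snoc by auto
    then show ?thesis using snoc assms by auto
  qed
qed (use assms in auto)

lemma expansion_sub_Rsandwich:
  fixes x :: "('i::finite) list"
  shows "expansion D N f x - Rsandwich (expansion D N) f x
    = (if length x \<le> N then (\<Sum>v\<in>words (length x). D (basis v) x * f v) else 0)"
proof -
  have "expansion D N f x - Rsandwich (expansion D N) f x =
     (\<Sum>m\<le>N. \<Sum>u\<in>words m. \<Sum>v\<in>words m. D (basis v) u *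
       ((if take m x = u then f (v @ drop m x) else 0) -
        (if x \<noteq> [] \<and> take m (butlast x) = u then f (v @ (drop m (butlast x) @ [last x])) else 0)))"
    by (cases "x = []") (auto simp: Rsandwich_apply expansion_apply Radj_def
        right_diff_distrib sum_subtractf cong: if_cong)
  also have "\<dots> = (\<Sum>m\<le>N. \<Sum>u\<in>words m. if x = u then (\<Sum>v\<in>words m. D (basis v) x * f v) else 0)"
    by (intro sum.cong refl)
       (auto simp: words_def prefix_indicator_diff[where F="\<lambda>z. f (_ @ z)"] sum_distrib_right)
  also have "\<dots> = (\<Sum>m\<le>N. if length x = m then (\<Sum>v\<in>words m. D (basis v) x * f v) else 0)"
    by (intro sum.cong refl, subst sum.delta'[OF finite_words]) (simp add: words_def)
  also have "\<dots> = (if length x \<le> N then (\<Sum>v\<in>words (length x). D (basis v) x * f v) else 0)"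
    by (subst sum.delta') auto
  finally show ?thesis .
qed

section \<open>The residual \<open>T - P_N\<close>\<close>

definition defect :: "('i::finite) op \<Rightarrow> 'i op" where
  "defect T = (\<lambda>f w. T f w - Rsandwich T f w)"

lemma sum_greaterThanAtMost_Suc:
  "(\<Sum>m\<in>{N<..Suc k}. a m) = (\<Sum>m\<in>{N<..k}. a m) + (if N < Suc k then a (Suc k) else (0::real))"
proof (cases "N < Suc k")
  case True
  then have "{N<..Suc k} = insert (Suc k) {N<..k}" by auto
  then show ?thesis using True by simp
qed simp

lemma sum_greaterThanAtMost_le_suminf:
  fixes a :: "nat \<Rightarrow> real"
  assumes "summable a" "\<And>n. a n \<ge> 0"
  shows "(\<Sum>m\<in>{N<..n}. a m) \<le> (\<Sum>i. a (i + Suc N))"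
proof -
  have "{N<..n} = (\<lambda>i. i + Suc N) ` {..<n - N}"
  proof (rule set_eqI, rule iffI)
    fix m assume "m \<in> {N<..n}"
    then show "m \<in> (\<lambda>i. i + Suc N) ` {..<n - N}" by (intro image_eqI[of _ _ "m - Suc N"]) auto
  qed auto
  then have "(\<Sum>m\<in>{N<..n}. a m) = (\<Sum>i<n - N. a (i + Suc N))"
    by (simp add: sum.reindex inj_on_def)
  also have "\<dots> \<le> (\<Sum>i. a (i + Suc N))"
    by (rule sum_le_suminf[OF summable_ignore_initial_segment[OF assms(1)]]) (use assms(2) in auto)
  finally show ?thesis .
qed

locale block_diagonal_with_bounded_defect =
  fixes T :: "('i::finite) op"
  assumes bounded: "bounded_op T"
    and block_diag: "block_diagonal T"
    and defect_bounded: "bounded_op (defect T)"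
begin

lemma T_in_level: "in_level n f \<Longrightarrow> in_level n (T f)"
  by (rule block_diagonal_in_level[OF block_diag])

lemma defect_in_level: assumes "in_level n f" shows "in_level n (defect T f)"
  using T_in_level[OF assms] Rsandwich_in_level[of T, OF bounded_op_zero[OF bounded] T_in_level assms]
  by (simp add: defect_def in_level_def)

lemma expansion_sub_Rsandwich_in_level:
  assumes "in_level n f"
  shows "expansion (defect T) N f x - Rsandwich (expansion (defect T) N) f x
    = (if length x \<le> N then defect T f x else 0)"
proof (cases "length x = n")
  case True
  then show ?thesis
    using bounded_op_apply_in_level[OF defect_bounded assms] by (simp add: expansion_sub_Rsandwich)
next
  case False
  then show ?thesis using assms defect_in_level[OF assms]
    by (auto simp: expansion_sub_Rsandwich in_level_def words_def intro!: sum.neutral)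
qed

definition residual :: "nat \<Rightarrow> 'i op" where
  "residual N = (\<lambda>f w. T f w - expansion (defect T) N f w)"

lemma residual_in_level: "in_level n f \<Longrightarrow> in_level n (residual N f)"
  using T_in_level expansion_in_level by (simp add: residual_def in_level_def)

lemma residual_level_part: "f \<in> ell2 \<Longrightarrow> residual N f x = residual N (level_part (length x) f) x"
  using block_diagonal_apply_level_part[OF bounded block_diag] expansion_level_part
  by (simp add: residual_def)

lemma residual_sub_Rsandwich:
  assumes "in_level n f"
  shows "residual N f x - Rsandwich (residual N) f x = (if N < length x then defect T f x else 0)"
proof -
  have "Rsandwich (residual N) f x = Rsandwich T f x - Rsandwich (expansion (defect T) N) f x"
    by (simp add: Rsandwich_apply residual_def)
  then show ?thesis
    using expansion_sub_Rsandwich_in_level[OF assms, of N x]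
    by (auto simp: residual_def defect_def algebra_simps)
qed

lemma vnorm_residual_step:
  assumes f: "in_level n f"
  shows "vnorm (residual N f) \<le> (if N < n then level_norm (defect T) n else 0) * vnorm f +
     L2_set (\<lambda>x. cmod (Rsandwich (residual N) f x)) (words n)"
proof -
  define A where "A = (\<lambda>x. if N < length x then defect T f x else 0)"
  define B where "B = Rsandwich (residual N) f"
  have "vnorm (residual N f) = L2_set (\<lambda>x. cmod (A x + B x)) (words n)"
    unfolding vnorm_in_level[OF residual_in_level[OF f]]
    using residual_sub_Rsandwich[OF f] by (simp add: A_def B_def algebra_simps)
  also have "\<dots> \<le> L2_set (\<lambda>x. cmod (A x)) (words n) + L2_set (\<lambda>x. cmod (B x)) (words n)"
    by (rule order_trans[OF L2_set_mono L2_set_triangle_ineq]) (auto simp: norm_triangle_ineq)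
  also have "L2_set (\<lambda>x. cmod (A x)) (words n) = (if N < n then vnorm (defect T f) else 0)"
    using vnorm_in_level[OF defect_in_level[OF f]]
    by (auto simp: A_def words_def intro: L2_set_cong L2_set_0')
  also have "\<dots> \<le> (if N < n then level_norm (defect T) n else 0) * vnorm f"
    using vnorm_le_level_norm[OF defect_bounded f] vnorm_nonneg by auto
  finally show ?thesis by (simp add: B_def)
qed

text \<open>The induction step uses that \<open>f \<mapsto> (R_j\<^sup>* f)_j\<close> is an isometry from \<open>F_{k+1}\<close> onto
  \<open>F_k\<^sup>d\<close>.\<close>

lemma vnorm_residual_in_level:
  fixes f :: "'i vec"
  shows "in_level n f \<Longrightarrow> vnorm (residual N f) \<le> (\<Sum>m\<in>{N<..n}. level_norm (defect T) m) * vnorm f"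
proof (induction n arbitrary: f)
  case 0
  have "L2_set (\<lambda>x. cmod (Rsandwich (residual N) f x)) (words 0) = 0"
    by (rule L2_set_0') (auto simp: words_def Rsandwich_apply)
  then show ?case using vnorm_residual_step[OF 0, where N=N] by simp
next
  case (Suc k)
  define s where "s = (\<Sum>m\<in>{N<..k}. level_norm (defect T) m)"
  have s0: "s \<ge> 0" unfolding s_def by (intro sum_nonneg level_norm_nonneg[OF defect_bounded])
  have lev: "in_level k (Radj j f)" for j using Radj_in_level_Suc[OF Suc.prems] .
  have "(\<Sum>x\<in>words (Suc k). (cmod (Rsandwich (residual N) f x))\<^sup>2)
      = (\<Sum>j\<in>UNIV. (vnorm (residual N (Radj j f)))\<^sup>2)"
    by (simp add: sum_words_Suc Rsandwich_apply vnorm_in_level_power2[OF residual_in_level[OF lev]])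
  also have "\<dots> \<le> (\<Sum>j\<in>UNIV. (s * vnorm (Radj j f))\<^sup>2)"
    by (intro sum_mono power_mono Suc.IH[unfolded s_def[symmetric]] lev vnorm_nonneg)
  also have "\<dots> = s\<^sup>2 * (\<Sum>j\<in>UNIV. (vnorm (Radj j f))\<^sup>2)"
    by (simp add: power_mult_distrib sum_distrib_left)
  also have "(\<Sum>j\<in>UNIV. (vnorm (Radj j f))\<^sup>2) = (vnorm f)\<^sup>2"
    unfolding vnorm_in_level_power2[OF lev] vnorm_in_level_power2[OF Suc.prems]
    by (simp add: sum_words_Suc Radj_def)
  also have "s\<^sup>2 * (vnorm f)\<^sup>2 = (s * vnorm f)\<^sup>2"
    by (simp add: power_mult_distrib)
  finally have "L2_set (\<lambda>x. cmod (Rsandwich (residual N) f x)) (words (Suc k)) \<le> sqrt ((s * vnorm f)\<^sup>2)"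
    unfolding L2_set_def by (rule real_sqrt_le_mono)
  also have "\<dots> = s * vnorm f"
    using s0 vnorm_nonneg[of f] by simp
  finally show ?case
    using vnorm_residual_step[OF Suc.prems, where N=N]
    by (simp add: sum_greaterThanAtMost_Suc s_def[symmetric] algebra_simps)
qed

lemma opnorm_residual_le:
  assumes "\<And>n. (\<Sum>m\<in>{N<..n}. level_norm (defect T) m) \<le> c" "c \<ge> 0"
  shows "opnorm (residual N) \<le> c"
proof (rule opnorm_le_of_levelwise[OF residual_level_part residual_in_level _ assms(2)])
  fix n and f :: "'i vec" assume "in_level n f"
  then show "vnorm (residual N f) \<le> c * vnorm f"
    using vnorm_residual_in_level mult_right_mono[OF assms(1) vnorm_nonneg] order_trans by blast
qed

lemma ex_opnorm_residual_less:
  assumes summable: "summable (level_norm (defect T))" and "e > 0"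
  obtains N where "opnorm (residual N) < e"
proof -
  have nonneg: "level_norm (defect T) n \<ge> 0" for n
    by (rule level_norm_nonneg[OF defect_bounded])
  obtain N where N: "\<forall>n\<ge>N. norm (\<Sum>i. level_norm (defect T) (i + n)) < e"
    using suminf_exist_split[OF \<open>e > 0\<close> summable] by blast
  have "opnorm (residual N) \<le> (\<Sum>i. level_norm (defect T) (i + Suc N))"
    using summable nonneg summable_ignore_initial_segment[OF summable, of "Suc N"]
    by (intro opnorm_residual_le sum_greaterThanAtMost_le_suminf suminf_nonneg) auto
  also have "\<dots> < e"
    using N[rule_format, of "Suc N"] by (simp add: abs_less_iff)
  finally show thesis by (rule that)
qed

end

theorem proposition3p5:
  fixes T :: "('i::finite) op"
  assumes "CARD('i) \<ge> 2"
    and "bounded_op T"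
    and "block_diagonal T"
    and "(\<lambda>f w. T f w - (\<Sum>i\<in>UNIV. Rop i (T (Radj i f)) w)) \<in> classS"
  shows "T \<in> Calg"
proof -
  have "defect T \<in> classS"
    using assms(4) by (simp add: defect_def Rsandwich_def)
  then have D_bounded: "bounded_op (defect T)" and D_summable: "summable (level_norm (defect T))"
    by (auto simp: classS_def)
  interpret block_diagonal_with_bounded_defect T
    using assms(2,3) D_bounded by unfold_locales
  have "\<exists>P\<in>polyalg. opnorm (\<lambda>f w. T f w - P f w) < e" if "e > 0" for e
    using ex_opnorm_residual_less[OF D_summable that] expansion_polyalg
    unfolding residual_def by blast
  then show ?thesis using assms(2) by (simp add: Calg_def)
qed

end
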